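(* Let $(\Omega,\mathcal{F})$ be a standard measurable space, let $T:\Omega\to\Omega$ be a measurable transformation, and let $V$ be a $T$-invariant upper probability on $(\Omega,\mathcal{F})$. Let $f:\Omega\to\mathbb{R}$ be bounded and $\mathcal{F}$-measurable, and let $g_f:\Omega\to\mathbb{R}$ be a bounded $\mathcal{I}$-measurable function such that for every $T$-invariant probability $P$ on $(\Omega,\mathcal{F})$ one has $\mathbb{E}_P(f\mid\mathcal{I})=g_f$ $P$-almost surely (such a $g_f$ exists). Then $$V\Big(\Omega\setminus\Big\{\omega\in\Omega:\lim_{n\to\infty}\frac{1}{n}\sum_{i=0}^{n-1}f(T^i\omega)=g_f(\omega)\Big\}\Big)=0.$$
   Context: A measurable space is standard if it is isomorphic (via a bijection preserving measurable sets in both directions) to a complete separable metric space with its Borel $\sigma$-algebra. A capacity on $(\Omega,\mathcal{F})$ is a map $\mu:\mathcal{F}\to[0,1]$ with $\mu(\emptyset)=0$, $\mu(\Omega)=1$ and $\mu(A)\le\mu(B)$ whenever $A\subset B$. An upper probability is a capacity $V$ for which there exists a set $\Lambda$ of ($\sigma$-additive) probabilities on $(\Omega,\mathcal{F})$, compact in the weak* topology (the topology of setwise convergence $P_\alpha(A)\to P(A)$ for all $A\in\mathcal{F}$), such that $V(A)=\max_{P\in\Lambda}P(A)$ for all $A\in\mathcal{F}$. $V$ is $T$-invariant if $V(T^{-1}A)=V(A)$ for all $A\in\mathcal{F}$. $\mathcal{I}=\{A\in\mathcal{F}:T^{-1}A=A\}$ is the $\sigma$-algebra of invariant sets, and $\mathbb{E}_P(f\mid\mathcal{I})$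 is the conditional expectation with respect to $P$. *)

theory Defs
  imports "HOL-Probability.Probability"
begin

definition Borel_of :: "'b topology \<Rightarrow> 'b measure" where
  "Borel_of X = sigma (topspace X) {U. openin X U}"

text \<open>The carrier of the metric
  space lives in the type 'b (a free type variable in the theorem, hence arbitrary).\<close>
definition standard_space_via :: "'b itself \<Rightarrow> 'a measure \<Rightarrow> bool" where
  "standard_space_via _ M \<longleftrightarrow>
     (\<exists>(S::'b set) d h. Metric_space S d \<and> Metric_space.mcomplete S d \<and>
        separable_space (Metric_space.mtopology S d) \<and>
        bij_betw h (space M) S \<and>
        h \<in> M \<rightarrow>\<^sub>M Borel_of (Metric_space.mtopology S d) \<and>
        the_inv_into (space M) h \<in> Borel_of (Metric_space.mtopology S d) \<rightarrow>\<^sub>M M)"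

definition capacity :: "'a measure \<Rightarrow> ('a set \<Rightarrow> real) \<Rightarrow> bool" where
  "capacity M \<mu> \<longleftrightarrow> \<mu> {} = 0 \<and> \<mu> (space M) = 1 \<and>
     (\<forall>A\<in>sets M. 0 \<le> \<mu> A \<and> \<mu> A \<le> 1) \<and>
     (\<forall>A\<in>sets M. \<forall>B\<in>sets M. A \<subseteq> B \<longrightarrow> \<mu> A \<le> \<mu> B)"

definition probs_on :: "'a measure \<Rightarrow> 'a measure set" where
  "probs_on M = {P. prob_space P \<and> sets P = sets M}"

text \<open>Compactness in the topology of setwise convergence: the weak* topology is the initial
  topology of the evaluations P \<mapsto> P(A), A \<in> sets M, i.e. the topology induced by the
  (injective) embedding into the product space of reals indexed by sets M.\<close>
definition setwise_compact :: "'a measure \<Rightarrow> 'a measure set \<Rightarrow> bool" where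
  "setwise_compact M \<Lambda> \<longleftrightarrow>
     compactin (product_topology (\<lambda>_. euclideanreal) (sets M))
       ((\<lambda>P. restrict (\<lambda>A. measure P A) (sets M)) ` \<Lambda>)"

definition upper_probability :: "'a measure \<Rightarrow> ('a set \<Rightarrow> real) \<Rightarrow> bool" where
  "upper_probability M V \<longleftrightarrow> capacity M V \<and>
     (\<exists>\<Lambda>. \<Lambda> \<subseteq> probs_on M \<and> setwise_compact M \<Lambda> \<and>
        (\<forall>A\<in>sets M. (\<exists>P\<in>\<Lambda>. V A = measure P A) \<and> (\<forall>P\<in>\<Lambda>. measure P A \<le> V A)))"

definition invariant_capacity :: "'a measure \<Rightarrow> ('a \<Rightarrow> 'a) \<Rightarrow> ('a set \<Rightarrow> real) \<Rightarrow> bool" where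
  "invariant_capacity M T V \<longleftrightarrow> (\<forall>A\<in>sets M. V (T -` A \<inter> space M) = V A)"

definition invariant_sets :: "'a measure \<Rightarrow> ('a \<Rightarrow> 'a) \<Rightarrow> 'a set set" where
  "invariant_sets M T = {A\<in>sets M. T -` A \<inter> space M = A}"

definition inv_algebra :: "'a measure \<Rightarrow> ('a \<Rightarrow> 'a) \<Rightarrow> 'a measure" where
  "inv_algebra M T = sigma (space M) (invariant_sets M T)"

definition invariant_prob :: "'a measure \<Rightarrow> ('a \<Rightarrow> 'a) \<Rightarrow> 'a measure \<Rightarrow> bool" where
  "invariant_prob M T P \<longleftrightarrow> P \<in> probs_on M \<and>
     (\<forall>A\<in>sets M. measure P (T -` A \<inter> space M) = measure P A)"

end

theory Submission
  imports Defs
begin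

text \<open>
  Birkhoff averages of \<open>f\<close> can fail to converge to \<open>g\<close> only on the set \<open>B\<close> of points where,
  for some \<open>c > 0\<close>, the Birkhoff sums of \<open>f - g - c\<close> or of \<open>g - f - c\<close> are unbounded above.
  This set is invariant, and for an invariant probability \<open>Q\<close> the maximal ergodic lemma on \<open>B\<close>,
  combined with \<open>E\<^sub>Q(f | \<I>) = g\<close>, gives \<open>Q(B) = 0\<close>.

  It remains to find an invariant probability \<open>Q\<close> with \<open>Q(B) = V(B)\<close>. Take \<open>P \<in> \<Lambda>\<close> with
  \<open>P(B) = V(B)\<close>. The Cesaro averages of \<open>P \<circ> T\<^sup>-\<^sup>i\<close> have a cluster point in the compact cube
  \<open>[0,1]\<^sup>\<F>\<close>; it is finitely additive, \<open>T\<close>-invariant, equal to \<open>P(B)\<close> on \<open>B\<close> and, since \<open>V\<close> is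
  invariant, dominated by \<open>V\<close>. Compactness of \<open>\<Lambda>\<close> makes \<open>V\<close> continuous at \<open>\<emptyset>\<close> along decreasing
  sequences, and domination by \<open>V\<close> turns finite into countable additivity.
\<close>

section \<open>Birkhoff sums\<close>

definition birkhoff_sum :: "('a \<Rightarrow> 'a) \<Rightarrow> ('a \<Rightarrow> real) \<Rightarrow> nat \<Rightarrow> 'a \<Rightarrow> real" where
  "birkhoff_sum T h n x = (\<Sum>i<n. h ((T ^^ i) x))"

lemma birkhoff_sum_0 [simp]: "birkhoff_sum T h 0 x = 0"
  by (simp add: birkhoff_sum_def)

lemma birkhoff_sum_Suc: "birkhoff_sum T h (Suc n) x = h x + birkhoff_sum T h n (T x)"
  unfolding birkhoff_sum_def sum.lessThan_Suc_shift by (simp add: funpow_Suc_right del: funpow.simps)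

lemma birkhoff_sum_diff_const:
  "birkhoff_sum T (\<lambda>x. h x - c) n x = birkhoff_sum T h n x - real n * c"
  by (simp add: birkhoff_sum_def sum_subtractf)

lemma birkhoff_sum_uminus: "birkhoff_sum T (\<lambda>x. - h x) n x = - birkhoff_sum T h n x"
  by (simp add: birkhoff_sum_def sum_negf)

lemma borel_measurable_birkhoff_sum [measurable]:
  assumes [measurable]: "T \<in> M \<rightarrow>\<^sub>M M" "h \<in> borel_measurable M"
  shows "birkhoff_sum T h n \<in> borel_measurable M"
  unfolding birkhoff_sum_def by measurable

lemma abs_birkhoff_sum_le:
  assumes "T \<in> M \<rightarrow>\<^sub>M M" "\<And>x. x \<in> space M \<Longrightarrow> \<bar>h x\<bar> \<le> C" "x \<in> space M"
  shows "\<bar>birkhoff_sum T h n x\<bar> \<le> n * C"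
proof -
  have "\<bar>birkhoff_sum T h n x\<bar> \<le> (\<Sum>i<n. \<bar>h ((T ^^ i) x)\<bar>)"
    unfolding birkhoff_sum_def by (rule sum_abs)
  also have "\<dots> \<le> (\<Sum>i<n. C)"
    by (intro sum_mono assms(2) measurable_space[OF measurable_compose_n[OF assms(1)] assms(3)])
  finally show ?thesis by simp
qed

definition birkhoff_max :: "('a \<Rightarrow> 'a) \<Rightarrow> ('a \<Rightarrow> real) \<Rightarrow> nat \<Rightarrow> 'a \<Rightarrow> real" where
  "birkhoff_max T h N x = Max ((\<lambda>k. birkhoff_sum T h k x) ` {..N})"

lemma birkhoff_sum_le_max: "k \<le> N \<Longrightarrow> birkhoff_sum T h k x \<le> birkhoff_max T h N x"
  unfolding birkhoff_max_def by (rule Max_ge) auto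

lemma birkhoff_max_nonneg: "0 \<le> birkhoff_max T h N x"
  using birkhoff_sum_le_max[of 0 N] by simp

lemma birkhoff_max_attained: "\<exists>k\<le>N. birkhoff_max T h N x = birkhoff_sum T h k x"
proof -
  have "birkhoff_max T h N x \<in> (\<lambda>k. birkhoff_sum T h k x) ` {..N}"
    unfolding birkhoff_max_def by (rule Max_in) auto
  then show ?thesis by auto
qed

lemma borel_measurable_birkhoff_max [measurable]:
  assumes "T \<in> M \<rightarrow>\<^sub>M M" "h \<in> borel_measurable M"
  shows "birkhoff_max T h N \<in> borel_measurable M"
  unfolding birkhoff_max_def using assms by (intro borel_measurable_Max) auto

lemma abs_birkhoff_max_le:
  assumes "T \<in> M \<rightarrow>\<^sub>M M" "\<And>x. x \<in> space M \<Longrightarrow> \<bar>h x\<bar> \<le> C" "x \<in> space M" "0 \<le> C"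
  shows "\<bar>birkhoff_max T h N x\<bar> \<le> N * C"
proof -
  obtain k where k: "k \<le> N" "birkhoff_max T h N x = birkhoff_sum T h k x"
    using birkhoff_max_attained[of N T h x] by blast
  have "\<bar>birkhoff_sum T h k x\<bar> \<le> k * C" by (rule abs_birkhoff_sum_le[OF assms(1-3)])
  also have "\<dots> \<le> N * C" using k(1) assms(4) by (intro mult_right_mono) auto
  finally show ?thesis unfolding k(2) .
qed

text \<open>Garsia's inequality: where the maximum is positive it is attained at some \<open>k \<ge> 1\<close>, and
  peeling off the first term of that sum leaves a sum dominated by the maximum at \<open>T x\<close>.\<close>
lemma birkhoff_max_diff_le:
  "birkhoff_max T h N x - birkhoff_max T h N (T x)
     \<le> indicator {y. 0 < birkhoff_max T h N y} x * h x"
proof (cases "0 < birkhoff_max T h N x")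
  case True
  obtain k where k: "k \<le> N" "birkhoff_max T h N x = birkhoff_sum T h k x"
    using birkhoff_max_attained[of N T h x] by blast
  with True obtain j where j: "k = Suc j" by (cases k) auto
  have "birkhoff_sum T h j (T x) \<le> birkhoff_max T h N (T x)"
    using k j by (intro birkhoff_sum_le_max) auto
  then show ?thesis using True k j by (simp add: birkhoff_sum_Suc)
next
  case False
  then show ?thesis using birkhoff_max_nonneg[of T h N "T x"] birkhoff_max_nonneg[of T h N x] by simp
qed

section \<open>Invariant sets and invariant probabilities\<close>

lemma invariant_setsD:
  assumes "F \<in> invariant_sets M T"
  shows "F \<in> sets M" and "x \<in> space M \<Longrightarrow> T x \<in> F \<longleftrightarrow> x \<in> F"
  using assms by (auto simp: invariant_sets_def)

lemma invariant_sets_funpow_iff: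
  assumes F: "F \<in> invariant_sets M T" and T: "T \<in> M \<rightarrow>\<^sub>M M" and x: "x \<in> space M"
  shows "(T ^^ i) x \<in> F \<longleftrightarrow> x \<in> F"
proof (induction i)
  case (Suc i)
  have "(T ^^ i) x \<in> space M" using measurable_space[OF measurable_compose_n[OF T] x] .
  then show ?case using invariant_setsD(2)[OF F] Suc by simp
qed simp

lemma sigma_algebra_invariant_sets:
  assumes T: "T \<in> M \<rightarrow>\<^sub>M M"
  shows "sigma_algebra (space M) (invariant_sets M T)"
  unfolding sigma_algebra_iff2
proof (intro conjI allI impI ballI)
  show "invariant_sets M T \<subseteq> Pow (space M)"
    by (auto simp: invariant_sets_def dest: sets.sets_into_space)
  show "{} \<in> invariant_sets M T" by (simp add: invariant_sets_def)
next
  fix A assume "A \<in> invariant_sets M T"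
  then show "space M - A \<in> invariant_sets M T"
    using measurable_space[OF T] by (auto simp: invariant_sets_def)
next
  fix A :: "nat \<Rightarrow> 'a set" assume "range A \<subseteq> invariant_sets M T"
  moreover have "T -` (\<Union>i. A i) \<inter> space M = (\<Union>i. T -` A i \<inter> space M)" by auto
  ultimately show "(\<Union>i. A i) \<in> invariant_sets M T"
    by (auto simp: invariant_sets_def)
qed

lemma space_inv_algebra: "space (inv_algebra M T) = space M"
  unfolding inv_algebra_def
  by (rule space_measure_of) (auto simp: invariant_sets_def dest: sets.sets_into_space)

lemma sets_inv_algebra:
  assumes "T \<in> M \<rightarrow>\<^sub>M M"
  shows "sets (inv_algebra M T) = invariant_sets M T"
  unfolding inv_algebra_def using sigma_algebra.sets_measure_of_eq[OF sigma_algebra_invariant_sets[OF assms]] .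

lemma subalgebra_inv_algebra:
  assumes "T \<in> M \<rightarrow>\<^sub>M M"
  shows "subalgebra M (inv_algebra M T)"
  unfolding subalgebra_def sets_inv_algebra[OF assms] space_inv_algebra
  by (auto simp: invariant_sets_def)

lemma inv_algebra_measurable_funpow:
  fixes g :: "'a \<Rightarrow> real"
  assumes T: "T \<in> M \<rightarrow>\<^sub>M M" and g: "g \<in> borel_measurable (inv_algebra M T)" and x: "x \<in> space M"
  shows "g ((T ^^ i) x) = g x"
proof -
  have "g -` {g x} \<inter> space M \<in> invariant_sets M T"
    using measurable_sets[OF g borel_closed[OF closed_singleton]]
    by (simp add: sets_inv_algebra[OF T] space_inv_algebra)
  from invariant_sets_funpow_iff[OF this T x, of i] x show ?thesis by simp
qed

lemma invariant_probD:
  assumes "invariant_prob M T Q"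
  shows "prob_space Q" "sets Q = sets M" "space Q = space M"
  using assms sets_eq_imp_space_eq[of Q M] by (auto simp: invariant_prob_def probs_on_def)

lemma invariant_prob_measure_vimage:
  assumes "invariant_prob M T Q" "A \<in> sets M"
  shows "measure Q (T -` A \<inter> space M) = measure Q A"
  using assms by (simp add: invariant_prob_def)

lemma integral_invariant_prob_comp:
  assumes Q: "invariant_prob M T Q" and T: "T \<in> M \<rightarrow>\<^sub>M M" and u: "u \<in> borel_measurable M"
  shows "(\<integral>x. u (T x) \<partial>Q) = (\<integral>x. u x \<partial>Q :: real)"
proof -
  interpret prob_space Q using invariant_probD(1)[OF Q] .
  have TQ: "T \<in> Q \<rightarrow>\<^sub>M Q"
    using T by (simp add: measurable_cong_sets[OF invariant_probD(2,2)[OF Q]])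
  have "distr Q Q T = Q"
  proof (rule measure_eqI)
    fix A assume "A \<in> sets (distr Q Q T)"
    then have A: "A \<in> sets M" using invariant_probD(2)[OF Q] by simp
    then show "emeasure (distr Q Q T) A = emeasure Q A"
      using TQ invariant_prob_measure_vimage[OF Q A] invariant_probD[OF Q]
      by (simp add: emeasure_distr emeasure_eq_measure)
  qed simp
  then have "(\<integral>x. u x \<partial>Q) = (\<integral>x. u x \<partial>distr Q Q T)" by simp
  also have "\<dots> = (\<integral>x. u (T x) \<partial>Q)"
    using u by (intro integral_distr[OF TQ]) (simp add: measurable_cong_sets[OF invariant_probD(2)[OF Q] refl])
  finally show ?thesis by simp
qed

section \<open>The maximal ergodic lemma\<close>

lemma bound_nonneg_if_prob_space:
  assumes "prob_space Q" "space Q = space M" "\<And>x. x \<in> space M \<Longrightarrow> \<bar>h x\<bar> \<le> (C::real)"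
  shows "0 \<le> C"
proof -
  obtain x where "x \<in> space M" using prob_space.not_empty[OF assms(1)] assms(2) by blast
  with assms(3)[of x] show ?thesis by linarith
qed

lemma maximal_ergodic_inequality:
  assumes Q: "invariant_prob M T Q" and T: "T \<in> M \<rightarrow>\<^sub>M M" and h: "h \<in> borel_measurable M"
    and hb: "\<And>x. x \<in> space M \<Longrightarrow> \<bar>h x\<bar> \<le> C"
  shows "0 \<le> (\<integral>x. indicator {y. 0 < birkhoff_max T h N y} x * h x \<partial>Q)"
proof -
  interpret prob_space Q using invariant_probD(1)[OF Q] .
  note sQ = invariant_probD(2,3)[OF Q]
  have C: "0 \<le> C" using bound_nonneg_if_prob_space[OF invariant_probD(1,3)[OF Q] hb] .
  let ?m = "birkhoff_max T h N"
  have m [measurable]: "?m \<in> borel_measurable Q"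
    using borel_measurable_birkhoff_max[OF T h] by (simp add: measurable_cong_sets[OF sQ(1) refl])
  have mb: "\<bar>?m x\<bar> \<le> N * C" if "x \<in> space Q" for x
    using abs_birkhoff_max_le[OF T hb _ C] that sQ by simp
  have int_m: "integrable Q ?m"
    by (rule integrable_const_bound[where B="N * C"]) (use mb in auto)
  have int_mT: "integrable Q (\<lambda>x. ?m (T x))"
  proof (rule integrable_const_bound[where B="N * C"])
    show "AE x in Q. norm (?m (T x)) \<le> N * C"
      using mb measurable_space[OF T] sQ by auto
    show "(\<lambda>x. ?m (T x)) \<in> borel_measurable Q"
      using measurable_comp[OF T borel_measurable_birkhoff_max[OF T h]]
      by (simp add: o_def measurable_cong_sets[OF sQ(1) refl])
  qed
  have int_h: "integrable Q (\<lambda>x. indicator {y. 0 < ?m y} x * h x)"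
  proof (rule integrable_const_bound[where B=C])
    show "AE x in Q. norm (indicator {y. 0 < ?m y} x * h x) \<le> C"
      using hb C sQ by (auto simp: indicator_def)
    have "h \<in> borel_measurable Q" using h by (simp add: measurable_cong_sets[OF sQ(1) refl])
    then show "(\<lambda>x. indicator {y. 0 < ?m y} x * h x) \<in> borel_measurable Q"
      by (simp add: indicator_def of_bool_def) measurable
  qed
  have "0 = (\<integral>x. ?m x \<partial>Q) - (\<integral>x. ?m (T x) \<partial>Q)"
    using integral_invariant_prob_comp[OF Q T borel_measurable_birkhoff_max[OF T h]] by simp
  also have "\<dots> = (\<integral>x. ?m x - ?m (T x) \<partial>Q)" using int_m int_mT by simp
  also have "\<dots> \<le> (\<integral>x. indicator {y. 0 < ?m y} x * h x \<partial>Q)"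
    by (intro integral_mono int_h birkhoff_max_diff_le) (use int_m int_mT in auto)
  finally show ?thesis .
qed

text \<open>On the invariant set \<open>F\<close> the Birkhoff sums of \<open>indicator F * h\<close> are those of \<open>h\<close>, so the
  sets where their running maxima are positive increase to \<open>F\<close>.\<close>
lemma maximal_ergodic_invariant_set:
  assumes Q: "invariant_prob M T Q" and T: "T \<in> M \<rightarrow>\<^sub>M M" and h: "h \<in> borel_measurable M"
    and hb: "\<And>x. x \<in> space M \<Longrightarrow> \<bar>h x\<bar> \<le> C"
    and F: "F \<in> invariant_sets M T" and pos: "F \<subseteq> {x. \<exists>n. 0 < birkhoff_sum T h n x}"
  shows "0 \<le> (\<integral>x. indicator F x * h x \<partial>Q)"
proof -
  interpret prob_space Q using invariant_probD(1)[OF Q] .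
  note sQ = invariant_probD(2,3)[OF Q]
  have C: "0 \<le> C" using bound_nonneg_if_prob_space[OF invariant_probD(1,3)[OF Q] hb] .
  define hF where "hF x = indicator F x * h x" for x
  have hF [measurable]: "hF \<in> borel_measurable M"
    unfolding hF_def using h invariant_setsD(1)[OF F] by measurable
  have hFb: "\<bar>hF x\<bar> \<le> C" if "x \<in> space M" for x
    using hb[OF that] C by (simp add: hF_def indicator_def)
  have sum_hF: "birkhoff_sum T hF n x = indicator F x * birkhoff_sum T h n x" if "x \<in> space M" for n x
    using invariant_sets_funpow_iff[OF F T that]
    by (simp add: birkhoff_sum_def hF_def indicator_def sum_distrib_left)
  let ?G = "\<lambda>N. {y. 0 < birkhoff_max T hF N y}"
  have "(\<lambda>N. \<integral>x. indicator (?G N) x * hF x \<partial>Q) \<longlonglongrightarrow> (\<integral>x. hF x \<partial>Q)"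
  proof (rule integral_dominated_convergence[where w="\<lambda>_. C"])
    show "(\<lambda>x. indicator (?G N) x * hF x) \<in> borel_measurable Q" for N
      using borel_measurable_birkhoff_max[OF T hF, of N]
      by (simp add: indicator_def of_bool_def measurable_cong_sets[OF sQ(1) refl]) measurable
    show "hF \<in> borel_measurable Q" by (simp add: measurable_cong_sets[OF sQ(1) refl])
    show "AE x in Q. norm (indicator (?G N) x * hF x) \<le> C" for N
      using hFb C sQ by (auto simp: indicator_def)
    show "AE x in Q. (\<lambda>N. indicator (?G N) x * hF x) \<longlonglongrightarrow> hF x"
    proof (rule AE_I2)
      fix x assume "x \<in> space Q"
      then have x: "x \<in> space M" using sQ by simp
      show "(\<lambda>N. indicator (?G N) x * hF x) \<longlonglongrightarrow> hF x"
      proof (cases "x \<in> F")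
        case True
        then obtain n where n: "0 < birkhoff_sum T h n x" using pos by blast
        have "x \<in> ?G N" if "n \<le> N" for N
          using birkhoff_sum_le_max[OF that, of T hF x] sum_hF[OF x, of n] n True by simp
        then have "eventually (\<lambda>N. indicator (?G N) x * hF x = hF x) sequentially"
          unfolding eventually_sequentially by (auto simp: indicator_def)
        then show ?thesis by (rule tendsto_eventually)
      qed (simp add: hF_def)
    qed
  qed simp
  moreover have "0 \<le> (\<integral>x. indicator (?G N) x * hF x \<partial>Q)" for N
    by (rule maximal_ergodic_inequality[OF Q T hF hFb])
  ultimately have "0 \<le> (\<integral>x. hF x \<partial>Q)" by (intro LIMSEQ_le_const) auto
  then show ?thesis by (simp add: hF_def)
qed

section \<open>Where Birkhoff averages fail to converge\<close>

definition unbounded_birkhoff_set :: "'a measure \<Rightarrow> ('a \<Rightarrow> 'a) \<Rightarrow> ('a \<Rightarrow> real) \<Rightarrow> 'a set" where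
  "unbounded_birkhoff_set M T h = {x \<in> space M. \<forall>K::nat. \<exists>n. real K < birkhoff_sum T h n x}"

text \<open>Shifting the starting point by \<open>T\<close> changes every Birkhoff sum by the single value \<open>h x\<close>.\<close>
lemma unbounded_birkhoff_set_invariant:
  assumes T: "T \<in> M \<rightarrow>\<^sub>M M" and h [measurable]: "h \<in> borel_measurable M"
  shows "unbounded_birkhoff_set M T h \<in> invariant_sets M T"
proof -
  have iff: "T x \<in> unbounded_birkhoff_set M T h \<longleftrightarrow> x \<in> unbounded_birkhoff_set M T h"
    if x: "x \<in> space M" for x
  proof -
    obtain d :: nat where d: "\<bar>h x\<bar> \<le> real d" using real_arch_simple by blast
    have "(\<forall>K::nat. \<exists>n. real K < birkhoff_sum T h n (T x)) \<longleftrightarrow>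
          (\<forall>K::nat. \<exists>n. real K < birkhoff_sum T h n x)"
    proof safe
      fix K assume "\<forall>K::nat. \<exists>n. real K < birkhoff_sum T h n (T x)"
      then obtain n where "real (K + d) < birkhoff_sum T h n (T x)" by blast
      then have "real K < birkhoff_sum T h (Suc n) x" using d by (simp add: birkhoff_sum_Suc)
      then show "\<exists>n. real K < birkhoff_sum T h n x" ..
    next
      fix K assume "\<forall>K::nat. \<exists>n. real K < birkhoff_sum T h n x"
      then obtain n where n: "real (K + d) < birkhoff_sum T h n x" by blast
      then obtain m where m: "n = Suc m" by (cases n) auto
      then have "real K < birkhoff_sum T h m (T x)" using n d by (simp add: birkhoff_sum_Suc)
      then show "\<exists>n. real K < birkhoff_sum T h n (T x)" ..
    qed
    then show ?thesis using x measurable_space[OF T x] by (simp add: unbounded_birkhoff_set_def)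
  qed
  have "unbounded_birkhoff_set M T h \<in> sets M"
    unfolding unbounded_birkhoff_set_def using T by measurable
  with iff show ?thesis
    by (auto simp: invariant_sets_def unbounded_birkhoff_set_def)
qed

lemma measure_unbounded_birkhoff_set_eq_0:
  assumes Q: "invariant_prob M T Q" and T: "T \<in> M \<rightarrow>\<^sub>M M"
    and u [measurable]: "u \<in> borel_measurable M"
    and ub: "\<And>x. x \<in> space M \<Longrightarrow> \<bar>u x\<bar> \<le> C" and c: "0 < c"
    and zero: "\<And>F. F \<in> invariant_sets M T \<Longrightarrow> (\<integral>x. indicator F x * u x \<partial>Q) = 0"
  shows "measure Q (unbounded_birkhoff_set M T (\<lambda>x. u x - c)) = 0"
proof -
  interpret prob_space Q using invariant_probD(1)[OF Q] .
  note sQ = invariant_probD(2,3)[OF Q]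
  define F where "F = unbounded_birkhoff_set M T (\<lambda>x. u x - c)"
  have F: "F \<in> invariant_sets M T"
    unfolding F_def by (intro unbounded_birkhoff_set_invariant[OF T]) measurable
  then have FQ: "F \<in> sets Q" using sQ by (simp add: invariant_sets_def)
  have C: "0 \<le> C" using bound_nonneg_if_prob_space[OF invariant_probD(1,3)[OF Q] ub] .
  have int_u: "integrable Q (\<lambda>x. indicator F x * u x)"
  proof (rule integrable_const_bound[where B=C])
    show "AE x in Q. norm (indicator F x * u x) \<le> C"
      using ub C sQ by (auto simp: indicator_def)
    show "(\<lambda>x. indicator F x * u x) \<in> borel_measurable Q"
      using invariant_setsD(1)[OF F] by (simp add: measurable_cong_sets[OF sQ(1) refl])
  qed
  have "0 \<le> (\<integral>x. indicator F x * (u x - c) \<partial>Q)"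
  proof (rule maximal_ergodic_invariant_set[OF Q T _ _ F])
    show "(\<lambda>x. u x - c) \<in> borel_measurable M" by measurable
    show "\<bar>u x - c\<bar> \<le> C + c" if "x \<in> space M" for x using ub[OF that] c by linarith
    show "F \<subseteq> {x. \<exists>n. 0 < birkhoff_sum T (\<lambda>x. u x - c) n x}"
      unfolding F_def unbounded_birkhoff_set_def by (auto dest!: spec[of _ 0])
  qed
  also have "\<dots> = (\<integral>x. indicator F x * u x - c * indicator F x \<partial>Q)"
    by (simp add: algebra_simps)
  also have "\<dots> = (\<integral>x. indicator F x * u x \<partial>Q) - c * measure Q F"
    using int_u FQ by (subst Bochner_Integration.integral_diff) (auto simp: emeasure_eq_measure)
  also have "\<dots> = - c * measure Q F" using zero[OF F] by simp
  finally show ?thesis using c measure_nonneg[of Q F] unfolding F_def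
    by (simp add: mult_le_0_iff)
qed

definition birkhoff_deviation_set :: "'a measure \<Rightarrow> ('a \<Rightarrow> 'a) \<Rightarrow> ('a \<Rightarrow> real) \<Rightarrow> 'a set" where
  "birkhoff_deviation_set M T u =
     (\<Union>k. unbounded_birkhoff_set M T (\<lambda>x. u x - 1 / Suc k) \<union>
          unbounded_birkhoff_set M T (\<lambda>x. - u x - 1 / Suc k))"

lemma birkhoff_deviation_set_invariant:
  assumes T: "T \<in> M \<rightarrow>\<^sub>M M" and u [measurable]: "u \<in> borel_measurable M"
  shows "birkhoff_deviation_set M T u \<in> invariant_sets M T"
proof -
  interpret I: sigma_algebra "space M" "invariant_sets M T"
    by (rule sigma_algebra_invariant_sets[OF T])
  have "unbounded_birkhoff_set M T (\<lambda>x. u x - 1 / Suc k) \<in> invariant_sets M T"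
    and "unbounded_birkhoff_set M T (\<lambda>x. - u x - 1 / Suc k) \<in> invariant_sets M T" for k
    by (intro unbounded_birkhoff_set_invariant[OF T], measurable)+
  then show ?thesis
    unfolding birkhoff_deviation_set_def by (intro I.countable_UN) (auto intro: I.Un)
qed

lemma measure_birkhoff_deviation_set_eq_0:
  assumes Q: "invariant_prob M T Q" and T: "T \<in> M \<rightarrow>\<^sub>M M"
    and u [measurable]: "u \<in> borel_measurable M"
    and ub: "\<And>x. x \<in> space M \<Longrightarrow> \<bar>u x\<bar> \<le> C"
    and zero: "\<And>F. F \<in> invariant_sets M T \<Longrightarrow> (\<integral>x. indicator F x * u x \<partial>Q) = 0"
  shows "measure Q (birkhoff_deviation_set M T u) = 0"
proof -
  interpret prob_space Q using invariant_probD(1)[OF Q] .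
  note sQ = invariant_probD(2,3)[OF Q]
  have zero': "(\<integral>x. indicator F x * - u x \<partial>Q) = 0" if "F \<in> invariant_sets M T" for F
    using zero[OF that] by simp
  have "unbounded_birkhoff_set M T (\<lambda>x. u x - 1 / Suc k) \<in> null_sets Q" for k
    using measure_unbounded_birkhoff_set_eq_0[OF Q T u ub _ zero]
      unbounded_birkhoff_set_invariant[OF T, of "\<lambda>x. u x - 1 / Suc k"]
    by (simp add: invariant_sets_def sQ null_sets_def emeasure_eq_measure)
  moreover have "unbounded_birkhoff_set M T (\<lambda>x. - u x - 1 / Suc k) \<in> null_sets Q" for k
    using measure_unbounded_birkhoff_set_eq_0[OF Q T _ _ _ zero', of C]
      unbounded_birkhoff_set_invariant[OF T, of "\<lambda>x. - u x - 1 / Suc k"] ub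
    by (simp add: invariant_sets_def sQ null_sets_def emeasure_eq_measure)
  ultimately have "birkhoff_deviation_set M T u \<in> null_sets Q"
    unfolding birkhoff_deviation_set_def by (intro null_sets_UN null_sets.Un)
  then show ?thesis by (simp add: measure_eq_0_null_sets)
qed

lemma averages_tendsto_0_if_sublinear:
  fixes s :: "nat \<Rightarrow> real"
  assumes bound: "\<And>k. \<exists>K. \<forall>n. \<bar>s n\<bar> \<le> K + real n / real (Suc k)"
  shows "(\<lambda>n. s n / real n) \<longlonglongrightarrow> 0"
proof (rule LIMSEQ_I)
  fix r :: real assume r: "0 < r"
  obtain k where k: "1 / real (Suc k) < r / 2"
    using r by (metis half_gt_zero_iff nat_approx_posE)
  obtain K where K: "\<And>n. \<bar>s n\<bar> \<le> K + real n / real (Suc k)" using bound by blast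
  obtain N :: nat where N: "2 * K / r < real N" using reals_Archimedean2 by blast
  have "\<bar>s n / real n\<bar> < r" if n: "N < n" for n
  proof -
    have pos: "0 < real n" using n by simp
    have "2 * K < real N * r" using N r by (simp add: field_simps)
    also have "\<dots> < real n * r" using n r by simp
    finally have "K / real n < r / 2" using pos by (simp add: field_simps)
    have "\<bar>s n / real n\<bar> = \<bar>s n\<bar> / real n" by simp
    also have "\<dots> \<le> (K + real n / real (Suc k)) / real n" by (intro divide_right_mono K) simp
    also have "\<dots> = K / real n + 1 / real (Suc k)" using pos by (simp add: add_divide_distrib)
    finally show ?thesis using \<open>K / real n < r / 2\<close> k by linarith
  qed
  then show "\<exists>N. \<forall>n\<ge>N. norm (s n / real n - 0) < r"
    by (intro exI[of _ "Suc N"]) auto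
qed

lemma birkhoff_averages_tendsto_0_outside_deviation_set:
  assumes "x \<in> space M" "x \<notin> birkhoff_deviation_set M T u"
  shows "(\<lambda>n. birkhoff_sum T u n x / real n) \<longlonglongrightarrow> 0"
proof (rule averages_tendsto_0_if_sublinear)
  fix k
  let ?c = "1 / real (Suc k)"
  have "x \<notin> unbounded_birkhoff_set M T (\<lambda>x. u x - ?c)"
    and "x \<notin> unbounded_birkhoff_set M T (\<lambda>x. - u x - ?c)"
    using assms(2) unfolding birkhoff_deviation_set_def by blast+
  then obtain K1 K2 :: nat where K1: "\<And>n. birkhoff_sum T (\<lambda>x. u x - ?c) n x \<le> real K1"
    and K2: "\<And>n. birkhoff_sum T (\<lambda>x. - u x - ?c) n x \<le> real K2"
    using assms(1) by (auto simp: unbounded_birkhoff_set_def not_less)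
  have "\<bar>birkhoff_sum T u n x\<bar> \<le> real (K1 + K2) + real n / real (Suc k)" for n
    using K1[of n] K2[of n]
    by (simp add: birkhoff_sum_diff_const birkhoff_sum_uminus)
  then show "\<exists>K. \<forall>n. \<bar>birkhoff_sum T u n x\<bar> \<le> K + real n / real (Suc k)" by blast
qed

lemma (in sigma_finite_subalgebra) integral_indicator_diff_real_cond_exp:
  fixes f g :: "'a \<Rightarrow> real"
  assumes f: "integrable M f" and g: "g \<in> borel_measurable M"
    and ae: "AE x in M. real_cond_exp M F f x = g x" and A: "A \<in> sets F"
  shows "(\<integral>x. indicator A x * (f x - g x) \<partial>M) = 0"
proof -
  have AM: "A \<in> sets M" using A subalg by (auto simp: subalgebra_def)
  have "integrable M g"
    by (rule integrable_cong_AE_imp[OF real_cond_exp_int(1)[OF f] g ae])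
  then have int_g: "integrable M (\<lambda>x. indicator A x * g x)"
    using integrable_mult_indicator[OF AM \<open>integrable M g\<close>] by simp
  have int_f: "integrable M (\<lambda>x. indicator A x * f x)"
    using integrable_mult_indicator[OF AM f] by simp
  have "(\<integral>x\<in>A. f x \<partial>M) = (\<integral>x\<in>A. real_cond_exp M F f x \<partial>M)"
    by (rule real_cond_exp_intA[OF f A])
  also have "\<dots> = (\<integral>x\<in>A. g x \<partial>M)"
    unfolding set_lebesgue_integral_def by (rule integral_cong_AE) (use ae AM g in auto)
  finally have "(\<integral>x. indicator A x * f x \<partial>M) = (\<integral>x. indicator A x * g x \<partial>M)"
    by (simp add: set_lebesgue_integral_def)
  then show ?thesis
    using int_f int_g by (simp add: right_diff_distrib)
qed

lemma birkhoff_averages_tendsto_outside_deviation_set: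
  fixes f g :: "'a \<Rightarrow> real"
  assumes T: "T \<in> M \<rightarrow>\<^sub>M M" and g: "g \<in> borel_measurable (inv_algebra M T)"
    and x: "x \<in> space M" and outside: "x \<notin> birkhoff_deviation_set M T (\<lambda>y. f y - g y)"
  shows "(\<lambda>n. (\<Sum>i<n. f ((T ^^ i) x)) / real n) \<longlonglongrightarrow> g x"
proof -
  have "eventually (\<lambda>n. birkhoff_sum T (\<lambda>y. f y - g y) n x / real n
                         = (\<Sum>i<n. f ((T ^^ i) x)) / real n - g x) sequentially"
    unfolding eventually_sequentially
    using inv_algebra_measurable_funpow[OF T g x]
    by (intro exI[of _ 1]) (simp add: birkhoff_sum_def sum_subtractf diff_divide_distrib)
  moreover have "(\<lambda>n. birkhoff_sum T (\<lambda>y. f y - g y) n x / real n) \<longlonglongrightarrow> 0"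
    by (rule birkhoff_averages_tendsto_0_outside_deviation_set[OF x outside])
  ultimately show ?thesis by (simp add: tendsto_cong LIM_zero_iff)
qed

lemma bounded_imageE:
  fixes f :: "'a \<Rightarrow> real"
  assumes "bounded (f ` S)"
  obtains C where "\<And>x. x \<in> S \<Longrightarrow> \<bar>f x\<bar> \<le> C"
  using assms unfolding bounded_iff by fastforce

lemma invariant_prob_integral_indicator_diff_eq_0:
  fixes f g :: "'a \<Rightarrow> real"
  assumes Q: "invariant_prob M T Q" and T: "T \<in> M \<rightarrow>\<^sub>M M"
    and f: "f \<in> borel_measurable M" "bounded (f ` space M)"
    and g: "g \<in> borel_measurable (inv_algebra M T)"
    and ae: "AE x in Q. real_cond_exp Q (inv_algebra M T) f x = g x"
    and F: "F \<in> invariant_sets M T"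
  shows "(\<integral>x. indicator F x * (f x - g x) \<partial>Q) = 0"
proof -
  interpret prob_space Q using invariant_probD(1)[OF Q] .
  note sQ = invariant_probD(2,3)[OF Q]
  have sub: "subalgebra Q (inv_algebra M T)"
    using subalgebra_inv_algebra[OF T] sQ by (simp add: subalgebra_def)
  interpret finite_measure_subalgebra Q "inv_algebra M T"
    by unfold_locales (rule sub)
  obtain C where C: "\<And>x. x \<in> space M \<Longrightarrow> \<bar>f x\<bar> \<le> C" using bounded_imageE[OF f(2)] by blast
  have "integrable Q f"
    using C f(1) sQ by (intro integrable_const_bound[where B=C]) (auto simp: measurable_cong_sets[OF sQ(1) refl])
  moreover have "F \<in> sets (inv_algebra M T)" using F by (simp add: sets_inv_algebra[OF T])
  ultimately show ?thesis
    using integral_indicator_diff_real_cond_exp[OF _ measurable_from_subalg[OF sub g] ae] by blast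
qed

section \<open>Invariant probabilities attaining an upper probability\<close>

lemma compactin_sequence_cluster_point:
  assumes K: "compactin X K" and x: "\<And>n. x n \<in> K"
  obtains y where "y \<in> K"
    and "\<And>F S. continuous_map X euclideanreal F \<Longrightarrow> closed S \<Longrightarrow>
           eventually (\<lambda>n. F (x n) \<in> S) sequentially \<Longrightarrow> F y \<in> S"
proof -
  let ?Y = "subtopology X K"
  define C where "C n = ?Y closure_of (x ` {n..})" for n
  have KX: "K \<subseteq> topspace X" using K by (rule compactin_subset_topspace)
  have "(\<Inter>n. C n) \<noteq> {}"
  proof (rule compact_space_imp_nest[OF compact_space_subtopology[OF K]])
    show "closedin ?Y (C n)" for n unfolding C_def by simp
    show "C n \<noteq> {}" for n
    proof -
      have "x ` {n..} \<subseteq> topspace ?Y" using x KX by auto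
      then have "x ` {n..} \<subseteq> C n" unfolding C_def by (rule closure_of_subset)
      then show ?thesis by auto
    qed
    show "decseq C"
      unfolding C_def decseq_def by (intro allI impI closure_of_mono image_mono) auto
  qed
  then obtain y where y: "\<And>n. y \<in> C n" by blast
  then have "y \<in> K" using closure_of_subset_topspace[of ?Y] KX by (auto simp: C_def)
  moreover have "F y \<in> S"
    if F: "continuous_map X euclideanreal F" and S: "closed S"
      and ev: "eventually (\<lambda>n. F (x n) \<in> S) sequentially" for F S
  proof -
    obtain N where N: "\<And>n. N \<le> n \<Longrightarrow> F (x n) \<in> S" using ev by (auto simp: eventually_sequentially)
    have "closedin X {z \<in> topspace X. F z \<in> S}"
      using closedin_continuous_map_preimage[OF F S[unfolded closed_closedin]] .
    then have "closedin ?Y ({z \<in> topspace X. F z \<in> S} \<inter> K)"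
      by (auto simp: closedin_subtopology)
    moreover have "x ` {N..} \<subseteq> {z \<in> topspace X. F z \<in> S} \<inter> K"
      using N x KX by auto
    ultimately have "C N \<subseteq> {z \<in> topspace X. F z \<in> S}"
      unfolding C_def by (meson closure_of_minimal le_infE)
    then show ?thesis using y by blast
  qed
  ultimately show ?thesis using that by blast
qed

lemma cluster_point_tendsto_eq:
  fixes F :: "'b \<Rightarrow> real"
  assumes cluster: "\<And>S. closed S \<Longrightarrow> eventually (\<lambda>n. F (x n) \<in> S) sequentially \<Longrightarrow> F y \<in> S"
    and lim: "(\<lambda>n. F (x n)) \<longlonglongrightarrow> l"
  shows "F y = l"
proof -
  have "dist (F y) l \<le> e" if "0 < e" for e
  proof -
    have "eventually (\<lambda>n. F (x n) \<in> cball l e) sequentially"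
      using lim[unfolded tendsto_iff, rule_format, OF that]
      by (auto simp: dist_commute elim!: eventually_mono)
    from cluster[OF closed_cball this] show ?thesis by (simp add: dist_commute)
  qed
  show ?thesis
  proof (rule ccontr)
    assume "F y \<noteq> l"
    then have "0 < dist (F y) l / 2" by simp
    from \<open>\<And>e. 0 < e \<Longrightarrow> dist (F y) l \<le> e\<close>[OF this] \<open>F y \<noteq> l\<close> show False by simp
  qed
qed

lemma upper_probabilityD:
  assumes "upper_probability M V"
  obtains \<Lambda> where "capacity M V" "\<Lambda> \<subseteq> probs_on M" "setwise_compact M \<Lambda>"
    and "\<And>A. A \<in> sets M \<Longrightarrow> \<exists>P\<in>\<Lambda>. V A = measure P A"
    and "\<And>A P. A \<in> sets M \<Longrightarrow> P \<in> \<Lambda> \<Longrightarrow> measure P A \<le> V A"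
  using assms unfolding upper_probability_def by blast

lemma probs_onD:
  assumes "P \<in> probs_on M"
  shows "prob_space P" "sets P = sets M" "space P = space M"
  using assms sets_eq_imp_space_eq[of P M] by (auto simp: probs_on_def)

lemma setwise_compact_cluster_point:
  assumes \<Lambda>: "setwise_compact M \<Lambda>" and P: "\<And>n. P n \<in> \<Lambda>"
  obtains P' where "P' \<in> \<Lambda>"
    and "\<And>A S. A \<in> sets M \<Longrightarrow> closed S \<Longrightarrow>
           eventually (\<lambda>n. measure (P n) A \<in> S) sequentially \<Longrightarrow> measure P' A \<in> S"
proof -
  define emb where "emb Q = restrict (\<lambda>A. measure Q A) (sets M)" for Q :: "'a measure"
  have "compactin (product_topology (\<lambda>_. euclideanreal) (sets M)) (emb ` \<Lambda>)"
    using \<Lambda> unfolding setwise_compact_def emb_def .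
  then obtain y where "y \<in> emb ` \<Lambda>" and cluster:
    "\<And>F S. continuous_map (product_topology (\<lambda>_. euclideanreal) (sets M)) euclideanreal F \<Longrightarrow>
       closed S \<Longrightarrow> eventually (\<lambda>n. F (emb (P n)) \<in> S) sequentially \<Longrightarrow> F y \<in> S"
    by (rule compactin_sequence_cluster_point[of _ _ "\<lambda>n. emb (P n)"]) (rule imageI[OF P], rule that)
  then obtain P' where P': "P' \<in> \<Lambda>" "y = emb P'" by blast
  have "measure P' A \<in> S"
    if A: "A \<in> sets M" and S: "closed S"
      and "eventually (\<lambda>n. measure (P n) A \<in> S) sequentially" for A S
  proof -
    have "eventually (\<lambda>n. emb (P n) A \<in> S) sequentially" using that by (simp add: emb_def)
    from cluster[OF continuous_map_product_projection[OF A] S this] show ?thesis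
      using A P'(2) by (simp add: emb_def)
  qed
  with P'(1) show ?thesis by (rule that)
qed

text \<open>A cluster point of measures attaining \<open>V\<close> on ever smaller members of the decreasing
  sequence is a single measure in \<open>\<Lambda>\<close> that is at least \<open>lim V(R n)\<close> on every \<open>R n\<close>.\<close>
lemma upper_probability_decseq_tendsto_0:
  assumes up: "upper_probability M V"
    and R: "range R \<subseteq> sets M" "decseq R" "(\<Inter>i. R i) = {}"
  shows "(\<lambda>i. V (R i)) \<longlonglongrightarrow> 0"
proof -
  obtain \<Lambda> where cap: "capacity M V" and \<Lambda>: "\<Lambda> \<subseteq> probs_on M" "setwise_compact M \<Lambda>"
    and attained: "\<And>A. A \<in> sets M \<Longrightarrow> \<exists>P\<in>\<Lambda>. V A = measure P A"
    by (rule upper_probabilityD[OF up]) (rule that)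
  have Rs: "R i \<in> sets M" for i using R(1) by auto
  have V_mono: "V A \<le> V B" if "A \<in> sets M" "B \<in> sets M" "A \<subseteq> B" for A B
    using cap that unfolding capacity_def by blast
  have "decseq (\<lambda>i. V (R i))"
    using R(2) Rs unfolding decseq_def by (blast intro: V_mono)
  moreover have V_nonneg: "0 \<le> V (R i)" for i using cap Rs unfolding capacity_def by blast
  ultimately obtain L where L: "(\<lambda>i. V (R i)) \<longlonglongrightarrow> L" "\<And>i. L \<le> V (R i)"
    using decseq_convergent by blast
  have "\<forall>N. \<exists>P. P \<in> \<Lambda> \<and> V (R N) = measure P (R N)" using attained[OF Rs] by blast
  then obtain P where P: "\<And>N. P N \<in> \<Lambda>" "\<And>N. V (R N) = measure (P N) (R N)"
    using choice[of "\<lambda>N P. P \<in> \<Lambda> \<and> V (R N) = measure P (R N)"] by blast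
  obtain P\<^sub>c where P\<^sub>c: "P\<^sub>c \<in> \<Lambda>" and cluster: "\<And>A S. A \<in> sets M \<Longrightarrow> closed S \<Longrightarrow>
      eventually (\<lambda>N. measure (P N) A \<in> S) sequentially \<Longrightarrow> measure P\<^sub>c A \<in> S"
    by (rule setwise_compact_cluster_point[OF \<Lambda>(2), of P]) (rule P(1), rule that)
  have prob_P: "prob_space Q" and sets_P: "sets Q = sets M" if "Q \<in> \<Lambda>" for Q
    using probs_onD(1,2) that \<Lambda>(1) by blast+
  interpret P\<^sub>c: prob_space P\<^sub>c using prob_P[OF P\<^sub>c] .
  have "L \<le> measure P\<^sub>c (R n)" for n
  proof -
    have "eventually (\<lambda>N. measure (P N) (R n) \<in> {L..}) sequentially"
      unfolding eventually_sequentially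
    proof (intro exI allI impI)
      fix N assume "n \<le> N"
      then have "measure (P N) (R N) \<le> measure (P N) (R n)"
        using R(2) Rs prob_P[OF P(1)] sets_P[OF P(1)]
        by (intro finite_measure.finite_measure_mono prob_space.axioms(1)) (auto simp: decseq_def)
      then show "measure (P N) (R n) \<in> {L..}" using L(2)[of N] P(2)[of N] by simp
    qed
    from cluster[OF Rs _ this] show ?thesis by simp
  qed
  moreover have "(\<lambda>n. measure P\<^sub>c (R n)) \<longlonglongrightarrow> 0"
    using P\<^sub>c.finite_Lim_measure_decseq[of R] R sets_P[OF P\<^sub>c] by simp
  ultimately have "L \<le> 0" by (intro LIMSEQ_le_const) auto
  moreover have "0 \<le> L" using V_nonneg by (intro LIMSEQ_le_const[OF L(1)]) auto
  ultimately show ?thesis using L(1) by simp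
qed

lemma prob_space_of_dominated_additive:
  assumes cont: "\<And>R. range R \<subseteq> sets M \<Longrightarrow> decseq R \<Longrightarrow> (\<Inter>i. R i) = {} \<Longrightarrow> (\<lambda>i. V (R i)) \<longlonglongrightarrow> 0"
    and nonneg: "\<And>C. C \<in> sets M \<Longrightarrow> 0 \<le> \<phi> C"
    and dominated: "\<And>C. C \<in> sets M \<Longrightarrow> \<phi> C \<le> V C"
    and additive: "\<And>C D. C \<in> sets M \<Longrightarrow> D \<in> sets M \<Longrightarrow> C \<inter> D = {} \<Longrightarrow> \<phi> (C \<union> D) = \<phi> C + \<phi> D"
    and one: "\<phi> (space M) = 1"
  obtains Q where "prob_space Q" "sets Q = sets M" "\<And>C. C \<in> sets M \<Longrightarrow> measure Q C = \<phi> C"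
proof -
  define \<mu> where "\<mu> C = ennreal (\<phi> C)" for C
  have empty: "\<phi> {} = 0" using additive[of "{}" "{}"] by simp
  have pos: "positive (sets M) \<mu>" unfolding positive_def \<mu>_def empty by simp
  have add: "additive (sets M) \<mu>"
    unfolding additive_def \<mu>_def using nonneg additive by (simp add: ennreal_plus)
  have "countably_additive (sets M) \<mu>"
  proof (rule sets.empty_continuous_imp_countably_additive[OF pos add])
    show "\<forall>A\<in>sets M. \<mu> A \<noteq> \<infinity>" unfolding \<mu>_def by simp
    fix R :: "nat \<Rightarrow> 'a set" assume R: "range R \<subseteq> sets M" "decseq R" "(\<Inter>i. R i) = {}"
    have "(\<lambda>i. \<phi> (R i)) \<longlonglongrightarrow> 0"
    proof (rule tendsto_sandwich[OF _ _ tendsto_const cont[OF R]])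
      show "eventually (\<lambda>i. 0 \<le> \<phi> (R i)) sequentially"
        and "eventually (\<lambda>i. \<phi> (R i) \<le> V (R i)) sequentially"
        using nonneg dominated R(1) by auto
    qed
    then show "(\<lambda>i. \<mu> (R i)) \<longlonglongrightarrow> 0"
      unfolding \<mu>_def using tendsto_ennrealI[of _ 0] by simp
  qed
  then have emeasure_Q: "emeasure (measure_of (space M) (sets M) \<mu>) C = \<phi> C" if "C \<in> sets M" for C
    using emeasure_measure_of_sigma[OF sets.sigma_algebra_axioms pos _ that] by (simp add: \<mu>_def)
  show ?thesis
  proof
    show "prob_space (measure_of (space M) (sets M) \<mu>)"
      by (rule prob_spaceI) (simp add: emeasure_Q one)
    show "measure (measure_of (space M) (sets M) \<mu>) C = \<phi> C" if "C \<in> sets M" for C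
      using emeasure_Q[OF that] nonneg[OF that] by (simp add: measure_def)
  qed simp
qed

definition cesaro_average :: "'a measure \<Rightarrow> ('a \<Rightarrow> 'a) \<Rightarrow> 'a measure \<Rightarrow> nat \<Rightarrow> 'a set \<Rightarrow> real" where
  "cesaro_average M T P n C = (\<Sum>i\<le>n. measure P ((T ^^ i) -` C \<inter> space M)) / real (Suc n)"

lemma cesaro_average_nonneg: "0 \<le> cesaro_average M T P n C"
  by (simp add: cesaro_average_def sum_nonneg)

lemma cesaro_average_le_1:
  assumes "prob_space P"
  shows "cesaro_average M T P n C \<le> 1"
proof -
  have "(\<Sum>i\<le>n. measure P ((T ^^ i) -` C \<inter> space M)) \<le> (\<Sum>i\<le>n. 1)"
    by (intro sum_mono prob_space.prob_le_1[OF assms])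
  then show ?thesis by (simp add: cesaro_average_def)
qed

lemma cesaro_average_space:
  assumes "P \<in> probs_on M" "T \<in> M \<rightarrow>\<^sub>M M"
  shows "cesaro_average M T P n (space M) = 1"
proof -
  have "(T ^^ i) -` space M \<inter> space M = space P" for i
    using measurable_space[OF measurable_compose_n[OF assms(2)]] probs_onD(3)[OF assms(1)] by auto
  then show ?thesis
    by (simp add: cesaro_average_def prob_space.prob_space[OF probs_onD(1)[OF assms(1)]])
qed

lemma cesaro_average_Un:
  assumes P: "P \<in> probs_on M" and T: "T \<in> M \<rightarrow>\<^sub>M M"
    and C: "C \<in> sets M" "D \<in> sets M" "C \<inter> D = {}"
  shows "cesaro_average M T P n (C \<union> D) = cesaro_average M T P n C + cesaro_average M T P n D"
proof -
  interpret prob_space P using probs_onD(1)[OF P] .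
  have "measure P ((T ^^ i) -` (C \<union> D) \<inter> space M)
        = measure P ((T ^^ i) -` C \<inter> space M) + measure P ((T ^^ i) -` D \<inter> space M)" for i
    using C measurable_sets[OF measurable_compose_n[OF T]] probs_onD(2)[OF P]
    by (subst finite_measure_Union[symmetric]) (auto intro!: arg_cong[where f="measure P"])
  then show ?thesis by (simp add: cesaro_average_def sum.distrib add_divide_distrib)
qed

lemma invariant_capacity_funpow:
  assumes "invariant_capacity M T V" "T \<in> M \<rightarrow>\<^sub>M M" "C \<in> sets M"
  shows "V ((T ^^ i) -` C \<inter> space M) = V C"
proof (induction i)
  case 0
  then show ?case using sets.sets_into_space[OF assms(3)] by (simp add: Int_absorb2)
next
  case (Suc i)
  have eq: "(T ^^ Suc i) -` C \<inter> space M = T -` ((T ^^ i) -` C \<inter> space M) \<inter> space M"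
    using measurable_space[OF assms(2)] by (auto simp: funpow_Suc_right simp del: funpow.simps)
  have "V ((T ^^ Suc i) -` C \<inter> space M) = V ((T ^^ i) -` C \<inter> space M)"
    unfolding eq using assms(1) measurable_sets[OF measurable_compose_n[OF assms(2)] assms(3)]
    unfolding invariant_capacity_def by blast
  with Suc show ?case by (simp only:)
qed

lemma cesaro_average_le:
  assumes ic: "invariant_capacity M T V" and T: "T \<in> M \<rightarrow>\<^sub>M M"
    and le: "\<And>A. A \<in> sets M \<Longrightarrow> measure P A \<le> V A" and C: "C \<in> sets M"
  shows "cesaro_average M T P n C \<le> V C"
proof -
  have "(\<Sum>i\<le>n. measure P ((T ^^ i) -` C \<inter> space M)) \<le> (\<Sum>i\<le>n. V C)"
    using le measurable_sets[OF measurable_compose_n[OF T] C] invariant_capacity_funpow[OF ic T C]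
    by (intro sum_mono) metis
  then show ?thesis by (simp add: cesaro_average_def divide_le_eq mult.commute)
qed

lemma cesaro_average_invariant_set:
  assumes T: "T \<in> M \<rightarrow>\<^sub>M M" and B: "B \<in> invariant_sets M T"
  shows "cesaro_average M T P n B = measure P B"
proof -
  have "(T ^^ i) -` B \<inter> space M = B" for i
    using invariant_sets_funpow_iff[OF B T] sets.sets_into_space[OF invariant_setsD(1)[OF B]]
    by blast
  then show ?thesis by (simp add: cesaro_average_def)
qed

lemma cesaro_average_vimage:
  assumes P: "prob_space P" and T: "T \<in> M \<rightarrow>\<^sub>M M"
  shows "\<bar>cesaro_average M T P n (T -` C \<inter> space M) - cesaro_average M T P n C\<bar> \<le> 1 / Suc n"
proof -
  define \<nu> where "\<nu> i = measure P ((T ^^ i) -` C \<inter> space M)" for i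
  have \<nu>_bounds: "0 \<le> \<nu> i" "\<nu> i \<le> 1" for i
    unfolding \<nu>_def by (simp_all add: prob_space.prob_le_1[OF P])
  have shift: "measure P ((T ^^ i) -` (T -` C \<inter> space M) \<inter> space M) = \<nu> (Suc i)" for i
    using measurable_space[OF measurable_compose_n[OF T]] unfolding \<nu>_def
    by (intro arg_cong[where f="measure P"]) auto
  have "(\<Sum>i\<le>n. \<nu> (Suc i)) - (\<Sum>i\<le>n. \<nu> i) = \<nu> (Suc n) - \<nu> 0"
    using sum_lessThan_telescope[of \<nu> "Suc n"] by (simp add: lessThan_Suc_atMost sum_subtractf)
  moreover have "cesaro_average M T P n (T -` C \<inter> space M) = (\<Sum>i\<le>n. \<nu> (Suc i)) / Suc n"
    unfolding cesaro_average_def shift ..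
  moreover have "cesaro_average M T P n C = (\<Sum>i\<le>n. \<nu> i) / Suc n"
    unfolding cesaro_average_def \<nu>_def ..
  ultimately have "cesaro_average M T P n (T -` C \<inter> space M) - cesaro_average M T P n C
      = (\<nu> (Suc n) - \<nu> 0) / Suc n"
    by (simp add: diff_divide_distrib[symmetric])
  moreover have "\<bar>\<nu> (Suc n) - \<nu> 0\<bar> \<le> 1"
    using \<nu>_bounds[of "Suc n"] \<nu>_bounds[of 0] by (simp add: abs_le_iff)
  ultimately show ?thesis by (simp add: divide_right_mono)
qed

lemma cesaro_average_vimage_diff_tendsto_0:
  assumes "prob_space P" "T \<in> M \<rightarrow>\<^sub>M M"
  shows "(\<lambda>n. cesaro_average M T P n (T -` C \<inter> space M) - cesaro_average M T P n C) \<longlonglongrightarrow> 0"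
proof (rule Lim_null_comparison)
  show "(\<lambda>n. 1 / real (Suc n)) \<longlonglongrightarrow> 0"
    using LIMSEQ_inverse_real_of_nat by (simp add: inverse_eq_divide)
qed (use cesaro_average_vimage[OF assms] in simp)

lemma cesaro_averages_cluster_point:
  assumes T: "T \<in> M \<rightarrow>\<^sub>M M" and ic: "invariant_capacity M T V"
    and P: "P \<in> probs_on M" and le: "\<And>A. A \<in> sets M \<Longrightarrow> measure P A \<le> V A"
  obtains \<phi> where "\<And>C. C \<in> sets M \<Longrightarrow> 0 \<le> \<phi> C" "\<And>C. C \<in> sets M \<Longrightarrow> \<phi> C \<le> V C"
    "\<And>C D. C \<in> sets M \<Longrightarrow> D \<in> sets M \<Longrightarrow> C \<inter> D = {} \<Longrightarrow> \<phi> (C \<union> D) = \<phi> C + \<phi> D"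
    "\<phi> (space M) = 1" "\<And>C. C \<in> sets M \<Longrightarrow> \<phi> (T -` C \<inter> space M) = \<phi> C"
    "\<And>B. B \<in> invariant_sets M T \<Longrightarrow> \<phi> B = measure P B"
proof -
  let ?X = "product_topology (\<lambda>_. euclideanreal) (sets M)"
  let ?K = "PiE (sets M) (\<lambda>_. {0..1::real})"
  define x where "x n = restrict (cesaro_average M T P n) (sets M)" for n
  have K: "compactin ?X ?K" by (simp add: compactin_PiE)
  have x_in_K: "x n \<in> ?K" for n
    using cesaro_average_nonneg cesaro_average_le_1[OF probs_onD(1)[OF P]] by (auto simp: x_def)
  obtain \<phi> where "\<phi> \<in> ?K" and cluster: "\<And>F S. continuous_map ?X euclideanreal F \<Longrightarrow> closed S \<Longrightarrow>
      eventually (\<lambda>n. F (x n) \<in> S) sequentially \<Longrightarrow> F \<phi> \<in> S"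
    by (rule compactin_sequence_cluster_point[OF K, of x]) (rule x_in_K, rule that)
  have proj: "continuous_map ?X euclideanreal (\<lambda>\<psi>. \<psi> C)" if "C \<in> sets M" for C
    using continuous_map_product_projection[OF that] .
  have limit: "F \<phi> = l" if "continuous_map ?X euclideanreal F" "(\<lambda>n. F (x n)) \<longlonglongrightarrow> l" for F l
    using cluster_point_tendsto_eq[OF cluster[OF that(1)] that(2)] .
  show ?thesis
  proof
    show "0 \<le> \<phi> C" if "C \<in> sets M" for C using \<open>\<phi> \<in> ?K\<close> that by auto
    show "\<phi> C \<le> V C" if C: "C \<in> sets M" for C
      using cluster[OF proj[OF C], of "{..V C}"] cesaro_average_le[OF ic T le C] C
      by (simp add: x_def)
    show "\<phi> (space M) = 1"
      using limit[OF proj[OF sets.top], of 1] cesaro_average_space[OF P T] by (simp add: x_def)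
    show "\<phi> B = measure P B" if B: "B \<in> invariant_sets M T" for B
      using limit[OF proj[OF invariant_setsD(1)[OF B]], of "measure P B"]
        cesaro_average_invariant_set[OF T B] invariant_setsD(1)[OF B] by (simp add: x_def)
    show "\<phi> (C \<union> D) = \<phi> C + \<phi> D" if C: "C \<in> sets M" "D \<in> sets M" "C \<inter> D = {}" for C D
    proof -
      have "continuous_map ?X euclideanreal (\<lambda>\<psi>. \<psi> (C \<union> D) - \<psi> C - \<psi> D)"
        using C by (intro continuous_map_diff proj) auto
      from limit[OF this, of 0] show ?thesis
        using cesaro_average_Un[OF P T C] C by (simp add: x_def)
    qed
    show "\<phi> (T -` C \<inter> space M) = \<phi> C" if C: "C \<in> sets M" for C
    proof -
      have TC: "T -` C \<inter> space M \<in> sets M" using measurable_sets[OF T C] .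
      have "continuous_map ?X euclideanreal (\<lambda>\<psi>. \<psi> (T -` C \<inter> space M) - \<psi> C)"
        using C TC by (intro continuous_map_diff proj)
      moreover have "(\<lambda>n. x n (T -` C \<inter> space M) - x n C) \<longlonglongrightarrow> 0"
        using cesaro_average_vimage_diff_tendsto_0[OF probs_onD(1)[OF P] T] C TC by (simp add: x_def)
      ultimately show ?thesis using limit by fastforce
    qed
  qed
qed

lemma invariant_prob_attaining_upper_probability:
  assumes T: "T \<in> M \<rightarrow>\<^sub>M M" and up: "upper_probability M V" and ic: "invariant_capacity M T V"
    and B: "B \<in> invariant_sets M T"
  obtains Q where "invariant_prob M T Q" "measure Q B = V B"
proof -
  obtain \<Lambda> where "capacity M V" "\<Lambda> \<subseteq> probs_on M" "setwise_compact M \<Lambda>"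
    and attained: "\<And>A. A \<in> sets M \<Longrightarrow> \<exists>P\<in>\<Lambda>. V A = measure P A"
    and dominated: "\<And>A P. A \<in> sets M \<Longrightarrow> P \<in> \<Lambda> \<Longrightarrow> measure P A \<le> V A"
    by (rule upper_probabilityD[OF up]) (rule that)
  obtain P where P: "P \<in> \<Lambda>" "V B = measure P B"
    using attained[OF invariant_setsD(1)[OF B]] by blast
  have P_prob: "P \<in> probs_on M" using P(1) \<open>\<Lambda> \<subseteq> probs_on M\<close> by blast
  have P_dominated: "\<And>A. A \<in> sets M \<Longrightarrow> measure P A \<le> V A" using P(1) dominated by blast
  obtain \<phi> where \<phi>: "\<And>C. C \<in> sets M \<Longrightarrow> 0 \<le> \<phi> C" "\<And>C. C \<in> sets M \<Longrightarrow> \<phi> C \<le> V C"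
    "\<And>C D. C \<in> sets M \<Longrightarrow> D \<in> sets M \<Longrightarrow> C \<inter> D = {} \<Longrightarrow> \<phi> (C \<union> D) = \<phi> C + \<phi> D"
    "\<phi> (space M) = 1" "\<And>C. C \<in> sets M \<Longrightarrow> \<phi> (T -` C \<inter> space M) = \<phi> C"
    "\<And>B. B \<in> invariant_sets M T \<Longrightarrow> \<phi> B = measure P B"
    using cesaro_averages_cluster_point[OF T ic P_prob P_dominated] by blast
  obtain Q where Q: "prob_space Q" "sets Q = sets M" "\<And>C. C \<in> sets M \<Longrightarrow> measure Q C = \<phi> C"
    using prob_space_of_dominated_additive[OF upper_probability_decseq_tendsto_0[OF up] \<phi>(1-4)]
    by blast
  have "invariant_prob M T Q"
    using Q \<phi>(5) measurable_sets[OF T] by (simp add: invariant_prob_def probs_on_def)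
  moreover have "measure Q B = V B"
    using Q(3)[OF invariant_setsD(1)[OF B]] \<phi>(6)[OF B] P(2) by simp
  ultimately show ?thesis by (rule that)
qed

theorem theorem3p1:
  fixes M :: "'a measure" and T :: "'a \<Rightarrow> 'a" and V :: "'a set \<Rightarrow> real"
    and f g :: "'a \<Rightarrow> real"
  assumes "standard_space_via TYPE('b) M"
    and "T \<in> M \<rightarrow>\<^sub>M M"
    and "upper_probability M V"
    and "invariant_capacity M T V"
    and "f \<in> borel_measurable M" and "bounded (f ` space M)"
    and "g \<in> borel_measurable (inv_algebra M T)" and "bounded (g ` space M)"
    and "\<And>P. invariant_prob M T P \<Longrightarrow>
           (AE x in P. real_cond_exp P (inv_algebra M T) f x = g x)"
  shows "V (space M - {\<omega>\<in>space M.
           (\<lambda>n. (\<Sum>i<n. f ((T ^^ i) \<omega>)) / real n) \<longlonglongrightarrow> g \<omega>}) = 0"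
proof -
  note T = assms(2) and up = assms(3) and f = assms(5,6) and g = assms(7)
  have gM: "g \<in> borel_measurable M" by (rule measurable_from_subalg[OF subalgebra_inv_algebra[OF T] g])
  obtain C where bound: "\<And>x. x \<in> space M \<Longrightarrow> \<bar>f x - g x\<bar> \<le> C"
    using bounded_imageE[OF bounded_minus_comp[OF f(2) assms(8)]] by blast
  define B where "B = birkhoff_deviation_set M T (\<lambda>x. f x - g x)"
  have B: "B \<in> invariant_sets M T"
    unfolding B_def using f(1) gM by (intro birkhoff_deviation_set_invariant[OF T]) measurable
  obtain Q where Q: "invariant_prob M T Q" "measure Q B = V B"
    by (rule invariant_prob_attaining_upper_probability[OF T up assms(4) B])
  have "measure Q B = 0"
    unfolding B_def using f(1) gM
    by (intro measure_birkhoff_deviation_set_eq_0[OF Q(1) T _ bound]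
        invariant_prob_integral_indicator_diff_eq_0[OF Q(1) T f g assms(9)[OF Q(1)]]) measurable
  then have "V B = 0" using Q(2) by simp
  let ?A = "space M - {\<omega>\<in>space M. (\<lambda>n. (\<Sum>i<n. f ((T ^^ i) \<omega>)) / real n) \<longlonglongrightarrow> g \<omega>}"
  have "?A \<subseteq> B"
    unfolding B_def using birkhoff_averages_tendsto_outside_deviation_set[OF T g] by blast
  moreover have "?A \<in> sets M" using f(1) gM T by measurable
  moreover have "capacity M V" using up by (simp add: upper_probability_def)
  ultimately have "0 \<le> V ?A" "V ?A \<le> V B"
    using invariant_setsD(1)[OF B] unfolding capacity_def by blast+
  with \<open>V B = 0\<close> show ?thesis by simp
qed

end
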